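(* Fix integers $L \ge 1$ and $K \ge 1$. Consider the following statistical model with parameters $\pi \in \Delta^{L-1}$, $\pi' \in \Delta^{L-1}$ and a matrix $\varphi = (\varphi_{lk})_{l \in \{1,\dots,L\}, k \in \{1,\dots,K\}}$ whose rows $\varphi_{l:} = (\varphi_{lk})_{k=1}^K$ lie in $\Delta^{K-1}$, where $\Delta^{m-1} = \{y \in (0,1)^m : y_1 + \dots + y_m = 1\}$ denotes the open probability simplex. Given the parameters, independently: $Y_i \sim \mathrm{Categorical}(L, \pi)$ and $C_i \mid Y_i = y_i \sim \mathrm{Categorical}(K, \varphi_{y_i:})$ for $i = 1, \dots, N$; $Y'_j \sim \mathrm{Categorical}(L, \pi')$ and $C'_j \mid Y'_j = y'_j \sim \mathrm{Categorical}(K, \varphi_{y'_j:})$ for $j = 1, \dots, N'$. The observed data are the pairs $(Y_i, C_i)_{i=1}^N$ and the values $(C'_j)_{j=1}^{N'}$ (the $Y'_j$ are unobserved). Let $P(\pi, \pi', \varphi)$ be a prior density on the parameter space that is continuous and strictly positive on the whole parameter space, and let the maximum a posteriori estimate $(\hat\pi, \hat\pi', \hat\varphi)$ be a maximizer of the posterior density $P(\pi, \pi', \varphi \mid \{(Y_i, C_i)\}, \{C'_j\})$. Assume the model is not misspecified, i.e., the data are generated by this model with true parameters $\pi^*, \pi'^*, \varphi^*$, where $\pi^*, \pi'^* \in \Delta^{L-1}$ and every row $\varphi^*_{l:} \in \Delta^{K-1}$ (open simplices), and assume that the $K \times L$ matrix $(\varphi^* )^T$ (whose $(k,l)$ entry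 is $P(C = k \mid Y = l)$) has full rank $L$. Then for every $\delta > 0$ and $\varepsilon > 0$ there exist $N$ and $N'$ large enough that, with probability at least $1 - \delta$, the maximum a posteriori estimate $(\hat\pi, \hat\pi', \hat\varphi)$ lies in the $\varepsilon$-neighborhood of the true parameter values $(\pi^*, \pi'^*, \varphi^* )$.
   Context: This is a model for quantification under prior probability shift: $Y$ is a class label in $\{1,\dots,L\}$, $C = f(X)$ is the output in $\{1,\dots,K\}$ of a fixed black-box mapping applied to features, the labeled population has label prevalence $\pi$, the unlabeled population has label prevalence $\pi'$, and both share the same conditional distribution $P(C = k \mid Y = l) = \varphi_{lk}$. *)

theory Defs
  imports "HOL-Analysis.Analysis" "HOL-Probability.Probability"
begin

text \<open>Labels Y range over the finite type 'l (L = CARD('l)), black-box outputs C over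
  the finite type 'k (K = CARD('k)). A parameter is a triple (pi, pi', phi) with
  pi, pi' :: real^'l and phi :: real^'k^'l, row l being phi$l, phi$l$k = P(C = k | Y = l).\<close>

type_synonym ('l, 'k) param = "(real^'l) \<times> (real^'l) \<times> (real^'k^'l)"

definition open_simplex :: "(real^'n::finite) set" where
  "open_simplex = {y. (\<forall>i. 0 < y$i \<and> y$i < 1) \<and> (\<Sum>i\<in>UNIV. y$i) = 1}"

definition param_space :: "('l::finite, 'k::finite) param set" where
  "param_space = {(p, p', f). p \<in> open_simplex \<and> p' \<in> open_simplex \<and> (\<forall>l. f$l \<in> open_simplex)}"

definition categorical :: "real^'n::finite \<Rightarrow> 'n pmf" where
  "categorical p = embed_pmf (\<lambda>i. p$i)"

definition joint_pmf :: "real^'l::finite \<Rightarrow> real^'k::finite^'l \<Rightarrow> ('l \<times> 'k) pmf" where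
  "joint_pmf p f = bind_pmf (categorical p) (\<lambda>y. map_pmf (\<lambda>c. (y, c)) (categorical (f$y)))"

definition data_pmf :: "nat \<Rightarrow> nat \<Rightarrow> ('l::finite, 'k::finite) param
    \<Rightarrow> ((nat \<Rightarrow> 'l \<times> 'k) \<times> (nat \<Rightarrow> 'k)) pmf" where
  "data_pmf N N' \<theta> = (case \<theta> of (p, p', f) \<Rightarrow>
     pair_pmf (Pi_pmf {..<N} undefined (\<lambda>_. joint_pmf p f))
              (Pi_pmf {..<N'} undefined (\<lambda>_. map_pmf snd (joint_pmf p' f))))"

definition likelihood :: "nat \<Rightarrow> nat \<Rightarrow> (nat \<Rightarrow> 'l \<times> 'k) \<Rightarrow> (nat \<Rightarrow> 'k)
    \<Rightarrow> ('l::finite, 'k::finite) param \<Rightarrow> real" where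
  "likelihood N N' yc c' \<theta> = (case \<theta> of (p, p', f) \<Rightarrow>
     (\<Prod>i<N. p$(fst (yc i)) * f$(fst (yc i))$(snd (yc i))) *
     (\<Prod>j<N'. \<Sum>l\<in>UNIV. p'$l * f$l$(c' j)))"

text \<open>MAP estimate: a maximiser over the parameter space of the posterior density,
  which is prior * likelihood divided by a data-dependent positive normalising
  constant; hence the maximisers are those of prior * likelihood.\<close>
definition is_MAP :: "(('l::finite, 'k::finite) param \<Rightarrow> real) \<Rightarrow> nat \<Rightarrow> nat
    \<Rightarrow> (nat \<Rightarrow> 'l \<times> 'k) \<Rightarrow> (nat \<Rightarrow> 'k) \<Rightarrow> ('l, 'k) param \<Rightarrow> bool" where
  "is_MAP prior N N' yc c' \<theta> \<longleftrightarrow> \<theta> \<in> param_space \<and>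
     (\<forall>\<theta>'\<in>param_space. prior \<theta>' * likelihood N N' yc c' \<theta>' \<le> prior \<theta> * likelihood N N' yc c' \<theta>)"

end

theory Submission
  imports Defs "HOL-Real_Asymp.Real_Asymp"
begin

text \<open>With high probability every cell count of the labelled pairs (Y, C) and of the unlabelled
  outputs C' lies within O(sqrt N) of its mean (Hoeffding). On that event, comparing the posterior
  at a MAP estimate with the posterior at the true parameter and using ln u \<le> 2 (sqrt u - 1)
  yields N H + N' H' \<le> O(1), where H and H' are the squared Hellinger distances between the
  laws of (Y, C), respectively of C', under the two parameters. The prior is absorbed into t
  pseudo-observations per cell: if the prior times their likelihood is unbounded for every t,
  no MAP estimate exists at all. Finally the parameter is identified by the two laws: pi and phi
  by the law of (Y, C), and then pi' by the law of C' because the transpose of the true phi is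
  injective. Hence small H and H' force the estimate close to the truth.\<close>

lemma open_simplexD:
  assumes "y \<in> open_simplex"
  shows "0 < y$i" "y$i < 1" "(\<Sum>i\<in>UNIV. y$i) = 1"
  using assms by (auto simp: open_simplex_def)

definition labelled_prob :: "('l::finite, 'k::finite) param \<Rightarrow> real^('l \<times> 'k)" where
  "labelled_prob \<theta> = (case \<theta> of (p, _, f) \<Rightarrow> \<chi> c. p$fst c * f$fst c$snd c)"

definition unlabelled_prob :: "('l::finite, 'k::finite) param \<Rightarrow> real^'k" where
  "unlabelled_prob \<theta> = (case \<theta> of (_, p', f) \<Rightarrow> \<chi> k. \<Sum>l\<in>UNIV. p'$l * f$l$k)"

lemma labelled_prob_nth [simp]: "labelled_prob (p, p', f) $ c = p$fst c * f$fst c$snd c"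
  by (simp add: labelled_prob_def)

lemma unlabelled_prob_nth [simp]: "unlabelled_prob (p, p', f) $ k = (\<Sum>l\<in>UNIV. p'$l * f$l$k)"
  by (simp add: unlabelled_prob_def)

lemma unlabelled_prob_eq_mult: "unlabelled_prob (p, p', f) = transpose f *v p'"
  by (simp add: vec_eq_iff matrix_vector_mult_def transpose_def mult.commute)

lemma labelled_prob_in_open_simplex:
  assumes "\<theta> \<in> param_space"
  shows "labelled_prob \<theta> \<in> open_simplex"
proof -
  obtain p p' f where \<theta>: "\<theta> = (p, p', f)" and p: "p \<in> open_simplex" and f: "\<And>l. f$l \<in> open_simplex"
    using assms by (auto simp: param_space_def)
  have "(\<Sum>c\<in>UNIV. labelled_prob \<theta> $ c) = (\<Sum>l\<in>UNIV. p$l * (\<Sum>k\<in>UNIV. f$l$k))"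
    by (simp add: \<theta> sum_distrib_left sum.cartesian_product' UNIV_Times_UNIV[symmetric]
        del: UNIV_Times_UNIV)
  also have "\<dots> = 1" using p f by (simp add: open_simplexD)
  finally have "(\<Sum>c\<in>UNIV. labelled_prob \<theta> $ c) = 1" .
  moreover have "0 < labelled_prob \<theta> $ c \<and> labelled_prob \<theta> $ c < 1" for c
    using p f mult_strict_mono[of "p$fst c" 1 "f$fst c$snd c" 1] open_simplexD(1)[OF f]
    by (cases c) (simp add: \<theta> open_simplexD less_imp_le)
  ultimately show ?thesis by (simp add: open_simplex_def)
qed

lemma unlabelled_prob_in_open_simplex:
  assumes "\<theta> \<in> param_space"
  shows "unlabelled_prob \<theta> \<in> open_simplex"
proof -
  obtain p p' f where \<theta>: "\<theta> = (p, p', f)" and p': "p' \<in> open_simplex" and f: "\<And>l. f$l \<in> open_simplex"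
    using assms by (auto simp: param_space_def)
  have "0 < unlabelled_prob \<theta> $ k" for k
    using p' f by (simp add: \<theta> sum_pos open_simplexD)
  moreover have "unlabelled_prob \<theta> $ k < 1" for k
  proof -
    have "(\<Sum>l\<in>UNIV. p'$l * f$l$k) < (\<Sum>l\<in>UNIV. p'$l)"
      using p' f by (intro sum_strict_mono) (simp_all add: open_simplexD)
    then show ?thesis using p' by (simp add: \<theta> open_simplexD)
  qed
  moreover have "(\<Sum>k\<in>UNIV. unlabelled_prob \<theta> $ k) = (\<Sum>l\<in>UNIV. p'$l * (\<Sum>k\<in>UNIV. f$l$k))"
    unfolding \<theta> unlabelled_prob_nth sum_distrib_left by (rule sum.swap)
  ultimately show ?thesis
    using open_simplexD(3)[OF p'] open_simplexD(3)[OF f] by (simp add: open_simplex_def)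
qed

lemma pmf_categorical:
  assumes "p \<in> open_simplex"
  shows "pmf (categorical p) i = p$i"
proof -
  have nonneg: "\<forall>j. 0 \<le> p$j" using assms by (simp add: open_simplexD less_imp_le)
  then have "(\<integral>\<^sup>+j. ennreal (p$j) \<partial>count_space UNIV) = 1"
    using assms by (simp add: nn_integral_count_space_finite open_simplexD)
  then show ?thesis
    using nonneg unfolding categorical_def by (subst pmf_embed_pmf) auto
qed

lemma pmf_joint_pmf:
  assumes "p \<in> open_simplex" "\<And>l. f$l \<in> open_simplex"
  shows "pmf (joint_pmf p f) (l, k) = p$l * f$l$k"
proof -
  have fiber: "pmf (map_pmf (Pair y) (categorical (f$y))) (l, k) = (if y = l then f$l$k else 0)" for y
    using assms(2) pmf_map_inj'[of "Pair l" "categorical (f$l)" k]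
    by (auto simp: pmf_categorical pmf_eq_0_set_pmf inj_on_def)
  have "pmf (joint_pmf p f) (l, k)
      = (\<Sum>y\<in>UNIV. pmf (map_pmf (Pair y) (categorical (f$y))) (l, k) * pmf (categorical p) y)"
    unfolding joint_pmf_def pmf_bind by (rule integral_measure_pmf_real) auto
  also have "\<dots> = p$l * f$l$k"
    by (simp add: fiber pmf_categorical assms(1) if_distrib[of "\<lambda>x. x * _"] cong: if_cong)
  finally show ?thesis .
qed

lemma pmf_marginal_joint_pmf:
  assumes "p \<in> open_simplex" "\<And>l. f$l \<in> open_simplex"
  shows "pmf (map_pmf snd (joint_pmf p f)) k = (\<Sum>l\<in>UNIV. p$l * f$l$k)"
proof -
  have "pmf (map_pmf snd (joint_pmf p f)) k = (\<Sum>c | snd c = k. pmf (joint_pmf p f) c)"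
    by (simp add: pmf_map measure_measure_pmf_finite vimage_def)
  also have "\<dots> = (\<Sum>c\<in>(\<lambda>l. (l, k)) ` UNIV. pmf (joint_pmf p f) c)"
    by (rule sum.cong) force+
  also have "\<dots> = (\<Sum>l\<in>UNIV. p$l * f$l$k)"
    by (simp add: sum.reindex inj_on_def pmf_joint_pmf assms)
  finally show ?thesis .
qed

section \<open>Concentration of the counts\<close>

definition occurrences :: "nat \<Rightarrow> (nat \<Rightarrow> 'a) \<Rightarrow> 'a \<Rightarrow> nat" where
  "occurrences N v a = card {i\<in>{..<N}. v i = a}"

lemma occurrences_0 [simp]: "occurrences 0 v a = 0"
  by (simp add: occurrences_def)

lemma occurrences_Suc: "occurrences (Suc N) v a = occurrences N v a + (if v N = a then 1 else 0)"
proof -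
  have "{i\<in>{..<Suc N}. v i = a} = {i\<in>{..<N}. v i = a} \<union> (if v N = a then {N} else {})"
    by (auto simp: less_Suc_eq)
  then show ?thesis by (simp add: occurrences_def)
qed

lemma occurrences_le: "occurrences N v a \<le> N"
  unfolding occurrences_def by (rule order_trans[OF card_mono[of "{..<N}"]]) auto

lemma prod_lessThan_conv_occurrences:
  fixes h :: "'a::finite \<Rightarrow> 'b::comm_monoid_mult"
  shows "(\<Prod>i<N. h (v i)) = (\<Prod>a\<in>UNIV. h a ^ occurrences N v a)"
proof (induction N)
  case (Suc N)
  have "(\<Prod>a\<in>UNIV. h a ^ occurrences (Suc N) v a)
      = (\<Prod>a\<in>UNIV. h a ^ occurrences N v a * (if v N = a then h a else 1))"
    by (intro prod.cong) (simp_all add: occurrences_Suc power_add)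
  also have "\<dots> = (\<Prod>a\<in>UNIV. h a ^ occurrences N v a) * h (v N)"
    by (simp add: prod.distrib)
  finally show ?case by (simp add: Suc)
qed simp

lemma map_pmf_eq_bernoulli_pmf: "map_pmf (\<lambda>x. x = a) D = bernoulli_pmf (pmf D a)"
proof (rule pmf_eqI)
  fix b :: bool
  have "measure_pmf.prob D {x. (x = a) = b} = (if b then pmf D a else 1 - pmf D a)"
    using measure_pmf.prob_compl[of "{a}" D]
    by (cases b) (simp_all add: measure_pmf_single Compl_eq_Diff_UNIV set_diff_eq)
  then show "pmf (map_pmf (\<lambda>x. x = a) D) b = pmf (bernoulli_pmf (pmf D a)) b"
    by (cases b) (simp_all add: pmf_map vimage_def pmf_le_1)
qed

lemma map_pmf_occurrences_Pi_pmf: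
  "map_pmf (\<lambda>v. occurrences N v a) (Pi_pmf {..<N} d (\<lambda>_. D)) = binomial_pmf N (pmf D a)"
proof -
  have "binomial_pmf N (pmf D a)
      = map_pmf (\<lambda>f. card {i\<in>{..<N}. f i}) (Pi_pmf {..<N} (d = a) (\<lambda>_. map_pmf (\<lambda>x. x = a) D))"
    unfolding map_pmf_eq_bernoulli_pmf by (rule binomial_pmf_altdef') (auto simp: pmf_le_1)
  also have "Pi_pmf {..<N} (d = a) (\<lambda>_. map_pmf (\<lambda>x. x = a) D)
      = map_pmf (\<lambda>v. (\<lambda>x. x = a) \<circ> v) (Pi_pmf {..<N} d (\<lambda>_. D))"
    by (rule Pi_pmf_map) auto
  finally show ?thesis by (simp add: map_pmf_comp occurrences_def)
qed

lemma prob_occurrences_deviation_ge: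
  assumes "0 < N" "0 \<le> \<epsilon>"
  shows "measure_pmf.prob (Pi_pmf {..<N} d (\<lambda>_. D))
           {v. \<epsilon> \<le> \<bar>real (occurrences N v a) - N * pmf D a\<bar>} \<le> 2 * exp (-2 * \<epsilon>\<^sup>2 / N)"
proof -
  interpret binomial_distribution N "pmf D a"
    by unfold_locales (simp add: pmf_le_1)
  have "measure_pmf.prob (Pi_pmf {..<N} d (\<lambda>_. D))
           {v. \<epsilon> \<le> \<bar>real (occurrences N v a) - N * pmf D a\<bar>}
      = measure_pmf.prob (map_pmf (\<lambda>v. occurrences N v a) (Pi_pmf {..<N} d (\<lambda>_. D)))
           {x. \<epsilon> \<le> \<bar>real x - N * pmf D a\<bar>}"
    by (simp add: vimage_def)
  then show ?thesis
    using prob_abs_ge[OF assms(1,2)] by (simp add: map_pmf_occurrences_Pi_pmf)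
qed

definition concentrated :: "real \<Rightarrow> nat \<Rightarrow> real^'a::finite \<Rightarrow> ('a \<Rightarrow> nat) \<Rightarrow> bool" where
  "concentrated s N P n \<longleftrightarrow> (\<forall>a. \<bar>real (n a) - N * P$a\<bar> < s * sqrt N)"

lemma concentrated_imp_ge:
  assumes "concentrated s N P n" "real t + s * sqrt N \<le> N * P$a"
  shows "t \<le> n a"
proof -
  have "\<bar>real (n a) - N * P$a\<bar> < s * sqrt N"
    using assms(1) by (simp add: concentrated_def)
  then have "real t < real (n a)"
    using assms(2) by linarith
  then show ?thesis by simp
qed

lemma prob_not_concentrated_le:
  fixes P :: "real^'a::finite"
  assumes "0 < N" "0 \<le> s" "\<And>a. pmf D a = P$a"
  shows "measure_pmf.prob (Pi_pmf {..<N} d (\<lambda>_. D)) {v. \<not> concentrated s N P (occurrences N v)}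
           \<le> 2 * CARD('a) * exp (-2 * s\<^sup>2)"
proof -
  let ?M = "Pi_pmf {..<N} d (\<lambda>_. D)"
  let ?far = "\<lambda>a. {v. s * sqrt N \<le> \<bar>real (occurrences N v a) - N * pmf D a\<bar>}"
  have "{v. \<not> concentrated s N P (occurrences N v)} = (\<Union>a. ?far a)"
    by (auto simp: concentrated_def assms(3) not_less)
  then have "measure_pmf.prob ?M {v. \<not> concentrated s N P (occurrences N v)}
      \<le> (\<Sum>a\<in>UNIV. measure_pmf.prob ?M (?far a))"
    by (simp add: measure_pmf.finite_measure_subadditive_finite)
  also have "\<dots> \<le> (\<Sum>a\<in>(UNIV::'a set). 2 * exp (-2 * s\<^sup>2))"
    using prob_occurrences_deviation_ge[OF assms(1), of "s * sqrt N"] assms(1,2)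
    by (intro sum_mono) (simp add: power_mult_distrib)
  finally show ?thesis by simp
qed

lemma prob_pair_pmf_fst: "measure_pmf.prob (pair_pmf M M') (fst -` A) = measure_pmf.prob M A"
  by (metis map_fst_pair_pmf measure_map_pmf)

lemma prob_pair_pmf_snd: "measure_pmf.prob (pair_pmf M M') (snd -` A) = measure_pmf.prob M' A"
  by (metis map_snd_pair_pmf measure_map_pmf)

lemma prob_pair_pmf_Times_ge:
  "1 - measure_pmf.prob M (- A) - measure_pmf.prob M' (- B) \<le> measure_pmf.prob (pair_pmf M M') (A \<times> B)"
proof -
  let ?U = "fst -` (- A) \<union> snd -` (- B)"
  have "measure_pmf.prob (pair_pmf M M') ?U
      \<le> measure_pmf.prob (pair_pmf M M') (fst -` (- A)) + measure_pmf.prob (pair_pmf M M') (snd -` (- B))"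
    by (rule measure_Un_le) simp_all
  also have "\<dots> = measure_pmf.prob M (- A) + measure_pmf.prob M' (- B)"
    by (simp only: prob_pair_pmf_fst prob_pair_pmf_snd)
  finally have "1 - measure_pmf.prob M (- A) - measure_pmf.prob M' (- B)
      \<le> 1 - measure_pmf.prob (pair_pmf M M') ?U"
    by linarith
  also have "\<dots> = measure_pmf.prob (pair_pmf M M') (UNIV - ?U)"
    using measure_pmf.prob_compl[of ?U "pair_pmf M M'"]
    by (simp only: sets_measure_pmf space_measure_pmf UNIV_I simp_thms)
  also have "UNIV - ?U = A \<times> B"
    by auto
  finally show ?thesis .
qed

lemma prob_data_concentrated:
  assumes "\<theta> \<in> param_space" "0 < \<delta>"
  obtains s where "\<And>N N'. 0 < N \<Longrightarrow> 0 < N' \<Longrightarrow> 1 - \<delta> \<le> measure_pmf.prob (data_pmf N N' \<theta>)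
    {(yc, c'). concentrated s N (labelled_prob \<theta>) (occurrences N yc)
             \<and> concentrated s N' (unlabelled_prob \<theta>) (occurrences N' c')}"
proof -
  obtain p p' f where \<theta>: "\<theta> = (p, p', f)"
    and simplex: "p \<in> open_simplex" "p' \<in> open_simplex" "\<And>l. f$l \<in> open_simplex"
    using assms(1) by (auto simp: param_space_def)
  have pmf_labelled: "pmf (joint_pmf p f) c = labelled_prob \<theta> $ c" for c
    by (cases c) (simp add: \<theta> pmf_joint_pmf simplex)
  have pmf_unlabelled: "pmf (map_pmf snd (joint_pmf p' f)) k = unlabelled_prob \<theta> $ k" for k
    by (simp add: \<theta> pmf_marginal_joint_pmf simplex)
  have "\<forall>\<^sub>F s in at_top. 0 \<le> s \<and> 2 * (CARD('a \<times> 'b) + CARD('b)) * exp (-2 * s\<^sup>2) \<le> \<delta>"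
    using assms(2) by (intro eventually_conj eventually_ge_at_top) real_asymp
  then obtain s where "0 \<le> s" and small: "2 * (CARD('a \<times> 'b) + CARD('b)) * exp (-2 * s\<^sup>2) \<le> \<delta>"
    unfolding eventually_at_top_linorder by blast
  have "1 - \<delta> \<le> measure_pmf.prob (data_pmf N N' \<theta>)
    {(yc, c'). concentrated s N (labelled_prob \<theta>) (occurrences N yc)
             \<and> concentrated s N' (unlabelled_prob \<theta>) (occurrences N' c')}"
    if "0 < N" "0 < N'" for N N'
  proof -
    let ?M = "Pi_pmf {..<N} undefined (\<lambda>_. joint_pmf p f)"
    let ?M' = "Pi_pmf {..<N'} undefined (\<lambda>_. map_pmf snd (joint_pmf p' f))"
    let ?good = "{v. concentrated s N (labelled_prob \<theta>) (occurrences N v)}"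
    let ?good' = "{v. concentrated s N' (unlabelled_prob \<theta>) (occurrences N' v)}"
    have "measure_pmf.prob ?M (- ?good) + measure_pmf.prob ?M' (- ?good')
        \<le> 2 * CARD('a \<times> 'b) * exp (-2 * s\<^sup>2) + 2 * CARD('b) * exp (-2 * s\<^sup>2)"
      using add_mono[OF prob_not_concentrated_le[OF that(1) \<open>0 \<le> s\<close> pmf_labelled]
          prob_not_concentrated_le[OF that(2) \<open>0 \<le> s\<close> pmf_unlabelled]]
      by (simp only: Collect_neg_eq)
    then have "1 - \<delta> \<le> measure_pmf.prob (pair_pmf ?M ?M') (?good \<times> ?good')"
      using small prob_pair_pmf_Times_ge[of ?M ?good ?M' ?good'] by (simp add: algebra_simps)
    also have "pair_pmf ?M ?M' = data_pmf N N' \<theta>"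
      by (simp add: data_pmf_def \<theta>)
    also have "?good \<times> ?good' = {(yc, c'). concentrated s N (labelled_prob \<theta>) (occurrences N yc)
             \<and> concentrated s N' (unlabelled_prob \<theta>) (occurrences N' c')}"
      by auto
    finally show ?thesis .
  qed
  then show ?thesis by (rule that)
qed

section \<open>The likelihood as a function of the counts\<close>

definition categorical_likelihood :: "real^'a::finite \<Rightarrow> ('a \<Rightarrow> nat) \<Rightarrow> real" where
  "categorical_likelihood P n = (\<Prod>a\<in>UNIV. P$a ^ n a)"

definition count_likelihood :: "('l \<times> 'k \<Rightarrow> nat) \<Rightarrow> ('k \<Rightarrow> nat) \<Rightarrow> ('l::finite, 'k::finite) param \<Rightarrow> real"
  where "count_likelihood n m \<theta> =
    categorical_likelihood (labelled_prob \<theta>) n * categorical_likelihood (unlabelled_prob \<theta>) m"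

lemma likelihood_eq_count_likelihood:
  "likelihood N N' yc c' \<theta> = count_likelihood (occurrences N yc) (occurrences N' c') \<theta>"
proof (cases \<theta>)
  case (fields p p' f)
  show ?thesis
    using prod_lessThan_conv_occurrences[where h = "\<lambda>c. labelled_prob \<theta> $ c" and N = N and v = yc]
      prod_lessThan_conv_occurrences[where h = "\<lambda>k. unlabelled_prob \<theta> $ k" and N = N' and v = c']
    by (simp add: likelihood_def count_likelihood_def categorical_likelihood_def fields)
qed

lemma categorical_likelihood_pos: "P \<in> open_simplex \<Longrightarrow> 0 < categorical_likelihood P n"
  by (simp add: categorical_likelihood_def prod_pos open_simplexD)

lemma categorical_likelihood_add:
  "categorical_likelihood P (\<lambda>a. n a + m a) = categorical_likelihood P n * categorical_likelihood P m"
  by (simp add: categorical_likelihood_def power_add prod.distrib)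

lemma categorical_likelihood_antimono:
  assumes "P \<in> open_simplex" "\<And>a. n a \<le> m a"
  shows "categorical_likelihood P m \<le> categorical_likelihood P n"
  unfolding categorical_likelihood_def
  using assms by (intro prod_mono) (simp add: power_decreasing open_simplexD less_imp_le)

lemma ln_categorical_likelihood:
  assumes "P \<in> open_simplex"
  shows "ln (categorical_likelihood P n) = (\<Sum>a\<in>UNIV. n a * ln (P$a))"
proof -
  have "ln (categorical_likelihood P n) = (\<Sum>a\<in>UNIV. ln (P$a ^ n a))"
    unfolding categorical_likelihood_def
    by (rule ln_prod) (use open_simplexD(1)[OF assms] in \<open>auto simp: less_imp_neq[symmetric]\<close>)
  then show ?thesis by (simp add: assms ln_realpow open_simplexD)
qed

lemma count_likelihood_pos: "\<theta> \<in> param_space \<Longrightarrow> 0 < count_likelihood n m \<theta>"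
  by (simp add: count_likelihood_def categorical_likelihood_pos labelled_prob_in_open_simplex
      unlabelled_prob_in_open_simplex)

lemma count_likelihood_add:
  "count_likelihood (\<lambda>c. n c + n' c) (\<lambda>k. m k + m' k) \<theta> = count_likelihood n m \<theta> * count_likelihood n' m' \<theta>"
  by (simp add: count_likelihood_def categorical_likelihood_add)

lemma count_likelihood_antimono:
  assumes "\<theta> \<in> param_space" "\<And>c. n c \<le> n' c" "\<And>k. m k \<le> m' k"
  shows "count_likelihood n' m' \<theta> \<le> count_likelihood n m \<theta>"
  unfolding count_likelihood_def using assms
  by (intro mult_mono categorical_likelihood_antimono)
    (simp_all add: categorical_likelihood_pos labelled_prob_in_open_simplex
      unlabelled_prob_in_open_simplex less_imp_le)

lemma ln_count_likelihood:
  "\<theta> \<in> param_space \<Longrightarrow> ln (count_likelihood n m \<theta>) =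
    ln (categorical_likelihood (labelled_prob \<theta>) n) + ln (categorical_likelihood (unlabelled_prob \<theta>) m)"
  unfolding count_likelihood_def
  by (rule ln_mult_pos) (simp_all add: categorical_likelihood_pos labelled_prob_in_open_simplex
      unlabelled_prob_in_open_simplex)

section \<open>Hellinger bounds\<close>

definition sq_hellinger :: "real^'a::finite \<Rightarrow> real^'a \<Rightarrow> real" where
  "sq_hellinger x y = (\<Sum>a\<in>UNIV. (sqrt (x$a) - sqrt (y$a))\<^sup>2)"

lemma sq_hellinger_nonneg: "0 \<le> sq_hellinger x y"
  by (simp add: sq_hellinger_def sum_nonneg)

lemma ln_le_twice_sqrt_minus_one: "0 < u \<Longrightarrow> ln u \<le> 2 * (sqrt u - 1)"
  using ln_le_minus_one[of "sqrt u"] by (simp add: ln_sqrt)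

lemma mult_ln_div_le:
  fixes x P n M :: real
  assumes "0 < x" "0 < P" "0 \<le> n" "0 < M"
  shows "n * ln (x / P) \<le>
    2 * M * (sqrt x * sqrt P - P) + M / 2 * (sqrt x - sqrt P)\<^sup>2 + 2 * (n - M * P)\<^sup>2 / (M * P)"
proof -
  define e where "e = n - M * P"
  define d where "d = sqrt x - sqrt P"
  have "n * ln (x / P) \<le> n * (2 * (sqrt (x / P) - 1))"
    using assms by (intro mult_left_mono ln_le_twice_sqrt_minus_one) auto
  also have "\<dots> = 2 * M * (sqrt x * sqrt P - P) + 2 * e * d / sqrt P"
    using assms unfolding e_def d_def by (simp add: real_sqrt_divide field_simps)
  also have "2 * e * d / sqrt P \<le> M / 2 * d\<^sup>2 + 2 * e\<^sup>2 / (M * P)" \<comment> \<open>AM-GM\<close>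
  proof -
    have "0 \<le> (M * d - 2 * e / sqrt P)\<^sup>2 / (2 * M)" using assms by simp
    also have "\<dots> = M / 2 * d\<^sup>2 + 2 * e\<^sup>2 / (M * P) - 2 * e * d / sqrt P"
      using assms by (simp add: power2_eq_square field_simps)
    finally show ?thesis by simp
  qed
  finally show ?thesis unfolding e_def d_def by simp
qed

lemma sum_sqrt_mult_minus_eq_sq_hellinger:
  assumes "x \<in> open_simplex" "y \<in> open_simplex"
  shows "(\<Sum>a\<in>UNIV. sqrt (x$a) * sqrt (y$a) - y$a) = - sq_hellinger x y / 2"
proof -
  have "sq_hellinger x y = (\<Sum>a\<in>UNIV. x$a + y$a - 2 * (sqrt (x$a) * sqrt (y$a)))"
    unfolding sq_hellinger_def using assms
    by (intro sum.cong) (simp_all add: power2_diff open_simplexD less_imp_le)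
  also have "\<dots> = 2 - 2 * (\<Sum>a\<in>UNIV. sqrt (x$a) * sqrt (y$a))"
    using open_simplexD(3)[OF assms(1)] open_simplexD(3)[OF assms(2)]
    by (simp add: sum.distrib sum_subtractf sum_distrib_left)
  finally show ?thesis
    using open_simplexD(3)[OF assms(2)] by (simp add: sum_subtractf)
qed

lemma ln_categorical_likelihood_ratio_le:
  assumes "x \<in> open_simplex" "P \<in> open_simplex" "0 < M"
  shows "ln (categorical_likelihood x n) - ln (categorical_likelihood P n)
    \<le> - (M / 2) * sq_hellinger x P + (\<Sum>a\<in>UNIV. 2 * (real (n a) - M * P$a)\<^sup>2 / (M * P$a))"
proof -
  have "ln (categorical_likelihood x n) - ln (categorical_likelihood P n)
      = (\<Sum>a\<in>UNIV. n a * ln (x$a / P$a))"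
    using assms by (simp add: ln_categorical_likelihood ln_divide_pos open_simplexD sum_subtractf
        right_diff_distrib)
  also have "\<dots> \<le> (\<Sum>a\<in>UNIV. 2 * M * (sqrt (x$a) * sqrt (P$a) - P$a)
      + M / 2 * (sqrt (x$a) - sqrt (P$a))\<^sup>2 + 2 * (n a - M * P$a)\<^sup>2 / (M * P$a))"
    using assms by (intro sum_mono mult_ln_div_le) (simp_all add: open_simplexD)
  also have "\<dots> = 2 * M * (\<Sum>a\<in>UNIV. sqrt (x$a) * sqrt (P$a) - P$a) + M / 2 * sq_hellinger x P
      + (\<Sum>a\<in>UNIV. 2 * (n a - M * P$a)\<^sup>2 / (M * P$a))"
    by (simp add: sum.distrib sum_distrib_left sq_hellinger_def)
  finally show ?thesis
    by (simp add: sum_sqrt_mult_minus_eq_sq_hellinger assms)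
qed

lemma ln_categorical_likelihood_ratio_le_concentrated:
  assumes "x \<in> open_simplex" "P \<in> open_simplex" "1 \<le> N" "concentrated s N P n" "\<And>a. t \<le> n a"
  shows "ln (categorical_likelihood x (\<lambda>a. n a - t)) - ln (categorical_likelihood P (\<lambda>a. n a - t))
    \<le> - (N / 2) * sq_hellinger x P + 4 * (s\<^sup>2 + (real t)\<^sup>2) * (\<Sum>a\<in>UNIV. 1 / P$a)"
proof -
  have "2 * (real (n a - t) - N * P$a)\<^sup>2 / (N * P$a) \<le> 4 * (s\<^sup>2 + (real t)\<^sup>2) * (1 / P$a)" for a
  proof -
    have dev: "\<bar>real (n a) - N * P$a\<bar> < s * sqrt N"
      using assms(4) by (simp add: concentrated_def)
    have "\<bar>real (n a - t) - N * P$a\<bar> \<le> s * sqrt N + t"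
      using dev assms(5)[of a] by simp
    then have "(real (n a - t) - N * P$a)\<^sup>2 \<le> (s * sqrt N + t)\<^sup>2"
      using dev by (intro abs_le_square_iff[THEN iffD1]) simp
    also have "\<dots> \<le> 2 * (s * sqrt N)\<^sup>2 + 2 * t\<^sup>2"
      using sum_squares_bound[of "s * sqrt N" t] by (simp add: power2_sum)
    also have "\<dots> = 2 * (s\<^sup>2 * N + t\<^sup>2)"
      by (simp add: power_mult_distrib)
    also have "\<dots> \<le> 2 * N * (s\<^sup>2 + t\<^sup>2)"
      using assms(3) mult_right_mono[of 1 "real N" "t\<^sup>2"] by (simp add: algebra_simps)
    finally have "2 * (real (n a - t) - N * P$a)\<^sup>2 / (N * P$a) \<le> 2 * (2 * N * (s\<^sup>2 + t\<^sup>2)) / (N * P$a)"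
      using assms(2,3) by (intro divide_right_mono) (simp_all add: open_simplexD less_imp_le)
    also have "\<dots> = 4 * (s\<^sup>2 + (real t)\<^sup>2) * (1 / P$a)"
      using assms(3) by simp
    finally show ?thesis .
  qed
  then have "(\<Sum>a\<in>UNIV. 2 * (real (n a - t) - N * P$a)\<^sup>2 / (N * P$a))
      \<le> 4 * (s\<^sup>2 + (real t)\<^sup>2) * (\<Sum>a\<in>UNIV. 1 / P$a)"
    by (simp add: sum_distrib_left sum_mono)
  then show ?thesis
    using ln_categorical_likelihood_ratio_le[OF assms(1,2), of N "\<lambda>a. n a - t"] assms(3) by simp
qed

lemma abs_diff_le_sq_hellinger:
  assumes "x \<in> open_simplex" "y \<in> open_simplex"
  shows "\<bar>x$a - y$a\<bar> \<le> 2 * sqrt (sq_hellinger x y)"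
proof -
  have "x$a - y$a = (sqrt (x$a) - sqrt (y$a)) * (sqrt (x$a) + sqrt (y$a))"
    using assms by (simp add: algebra_simps open_simplexD less_imp_le)
  also have "\<bar>\<dots>\<bar> \<le> \<bar>sqrt (x$a) - sqrt (y$a)\<bar> * 2"
  proof -
    have "sqrt (x$a) \<le> 1" "sqrt (y$a) \<le> 1" "0 \<le> sqrt (x$a) + sqrt (y$a)"
      using assms by (simp_all add: open_simplexD less_imp_le)
    then have "\<bar>sqrt (x$a) + sqrt (y$a)\<bar> \<le> 2"
      by (subst abs_of_nonneg) linarith+
    then show ?thesis unfolding abs_mult by (intro mult_left_mono) simp_all
  qed
  also have "\<bar>sqrt (x$a) - sqrt (y$a)\<bar> = sqrt ((sqrt (x$a) - sqrt (y$a))\<^sup>2)"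
    by simp
  also have "\<dots> \<le> sqrt (sq_hellinger x y)"
    unfolding sq_hellinger_def by (intro real_sqrt_le_mono member_le_sum) auto
  finally show ?thesis by simp
qed

lemma tendsto_if_sq_hellinger_tendsto_zero:
  assumes "\<And>n. x n \<in> open_simplex" "y \<in> open_simplex" "((\<lambda>n. sq_hellinger (x n) y) \<longlongrightarrow> 0) F"
  shows "(x \<longlongrightarrow> y) F"
proof (rule vec_tendstoI)
  fix a
  have bound: "norm (x n $ a - y $ a) \<le> 2 * sqrt (sq_hellinger (x n) y)" for n
    unfolding real_norm_def by (rule abs_diff_le_sq_hellinger[OF assms(1,2)])
  have "((\<lambda>n. 2 * sqrt (sq_hellinger (x n) y)) \<longlongrightarrow> 0) F"
    using tendsto_mult[OF tendsto_const tendsto_real_sqrt[OF assms(3)], of 2] by simp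
  then have "((\<lambda>n. x n $ a - y $ a) \<longlongrightarrow> 0) F"
    by (rule Lim_null_comparison[OF always_eventually[OF allI], rotated]) (rule bound)
  then show "((\<lambda>n. x n $ a) \<longlongrightarrow> y $ a) F"
    by (rule LIM_zero_cancel)
qed

section \<open>Identifiability\<close>

lemma tendsto_weights_if_mixtures_tendsto:
  fixes w :: "nat \<Rightarrow> real^'l::finite" and f :: "nat \<Rightarrow> real^'k::finite^'l"
  assumes inj: "inj ((*v) (transpose \<phi>))" and w: "\<And>n. w n \<in> open_simplex" and f: "f \<longlonglongrightarrow> \<phi>"
    and mixtures: "(\<lambda>n. transpose (f n) *v w n) \<longlonglongrightarrow> transpose \<phi> *v v"
  shows "w \<longlonglongrightarrow> v"
proof -
  have "(\<lambda>n. transpose \<phi> *v w n) \<longlonglongrightarrow> transpose \<phi> *v v"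
  proof (rule vec_tendstoI)
    fix k
    \<comment> \<open>the weights stay bounded, so replacing \<open>f n\<close> by its limit costs nothing in the limit\<close>
    have "(\<lambda>n. \<Sum>l\<in>UNIV. w n $ l * (f n $ l $ k - \<phi> $ l $ k)) \<longlonglongrightarrow> 0"
    proof (rule tendsto_null_sum)
      fix l
      have "(\<lambda>n. \<bar>f n $ l $ k - \<phi> $ l $ k\<bar>) \<longlonglongrightarrow> 0"
        using tendsto_rabs_zero[OF LIM_zero[OF tendsto_vec_nth[OF tendsto_vec_nth[OF f]]]] .
      then show "(\<lambda>n. w n $ l * (f n $ l $ k - \<phi> $ l $ k)) \<longlonglongrightarrow> 0"
        by (rule Lim_null_comparison[OF always_eventually[OF allI], rotated])
          (use w in \<open>auto simp: abs_mult open_simplexD less_imp_le intro!: mult_left_le_one_le\<close>)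
    qed
    with tendsto_vec_nth[OF mixtures, of k]
    have "(\<lambda>n. (transpose (f n) *v w n) $ k - (\<Sum>l\<in>UNIV. w n $ l * (f n $ l $ k - \<phi> $ l $ k)))
        \<longlonglongrightarrow> (transpose \<phi> *v v) $ k - 0"
      by (intro tendsto_diff)
    then show "(\<lambda>n. (transpose \<phi> *v w n) $ k) \<longlonglongrightarrow> (transpose \<phi> *v v) $ k"
      by (simp add: matrix_vector_mult_def transpose_def algebra_simps sum_subtractf)
  qed
  moreover obtain g where g: "linear g" "g \<circ> (*v) (transpose \<phi>) = id"
    using linear_injective_left_inverse[OF matrix_vector_mul_linear inj] by blast
  ultimately have "(\<lambda>n. g (transpose \<phi> *v w n)) \<longlonglongrightarrow> g (transpose \<phi> *v v)"
    using linear_continuous_at[of g]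
    by (intro isCont_tendsto_compose[of _ g]) (auto simp: linear_conv_bounded_linear)
  then show ?thesis
    using g(2) by (simp add: fun_eq_iff)
qed

lemma tendsto_param_if_probs_tendsto:
  fixes \<theta> :: "nat \<Rightarrow> ('l::finite, 'k::finite) param"
  assumes \<theta>s: "(\<pi>s, \<pi>s', \<phi>s) \<in> param_space" and inj: "inj ((*v) (transpose \<phi>s))"
    and \<theta>: "\<And>n. \<theta> n \<in> param_space"
    and labelled: "(\<lambda>n. labelled_prob (\<theta> n)) \<longlonglongrightarrow> labelled_prob (\<pi>s, \<pi>s', \<phi>s)"
    and unlabelled: "(\<lambda>n. unlabelled_prob (\<theta> n)) \<longlonglongrightarrow> unlabelled_prob (\<pi>s, \<pi>s', \<phi>s)"
  shows "\<theta> \<longlonglongrightarrow> (\<pi>s, \<pi>s', \<phi>s)"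
proof -
  define p p' f where "p n = fst (\<theta> n)" and "p' n = fst (snd (\<theta> n))" and "f n = snd (snd (\<theta> n))"
    for n
  have \<theta>_eq: "\<theta> n = (p n, p' n, f n)" for n
    by (simp add: p_def p'_def f_def)
  have simplex: "p n \<in> open_simplex" "p' n \<in> open_simplex" "f n $ l \<in> open_simplex" for n l
    using \<theta>[of n] by (auto simp: \<theta>_eq param_space_def)
  have simplex_s: "\<pi>s \<in> open_simplex" "\<phi>s $ l \<in> open_simplex" for l
    using \<theta>s by (auto simp: param_space_def)
  have labelled_nth: "(\<lambda>n. p n $ l * f n $ l $ k) \<longlonglongrightarrow> \<pi>s $ l * \<phi>s $ l $ k" for l k
    using tendsto_vec_nth[OF labelled, of "(l, k)"] by (simp add: \<theta>_eq)
  have p_nth: "(\<lambda>n. p n $ l) \<longlonglongrightarrow> \<pi>s $ l" for l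
  proof -
    have "(\<lambda>n. \<Sum>k\<in>UNIV. p n $ l * f n $ l $ k) \<longlonglongrightarrow> (\<Sum>k\<in>UNIV. \<pi>s $ l * \<phi>s $ l $ k)"
      by (intro tendsto_sum labelled_nth)
    then show ?thesis
      by (simp add: simplex simplex_s open_simplexD flip: sum_distrib_left)
  qed
  have f_nth: "(\<lambda>n. f n $ l $ k) \<longlonglongrightarrow> \<phi>s $ l $ k" for l k
  proof -
    have "(\<lambda>n. p n $ l * f n $ l $ k / p n $ l) \<longlonglongrightarrow> \<pi>s $ l * \<phi>s $ l $ k / \<pi>s $ l"
      using open_simplexD(1)[OF simplex_s(1), of l]
      by (intro tendsto_divide labelled_nth p_nth) simp
    moreover have "p n $ l \<noteq> 0" "\<pi>s $ l \<noteq> 0" for n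
      using open_simplexD(1)[OF simplex(1)] open_simplexD(1)[OF simplex_s(1)] by (metis less_irrefl)+
    ultimately show ?thesis by simp
  qed
  have "f \<longlonglongrightarrow> \<phi>s"
    by (intro vec_tendstoI f_nth)
  moreover have "p' \<longlonglongrightarrow> \<pi>s'"
    by (rule tendsto_weights_if_mixtures_tendsto[OF inj simplex(2) \<open>f \<longlonglongrightarrow> \<phi>s\<close>])
      (use unlabelled in \<open>simp add: \<theta>_eq unlabelled_prob_eq_mult\<close>)
  moreover have "p \<longlonglongrightarrow> \<pi>s"
    by (intro vec_tendstoI p_nth)
  ultimately show ?thesis
    unfolding \<theta>_eq by (intro tendsto_Pair)
qed

lemma far_params_hellinger_separated:
  fixes \<pi>s \<pi>s' :: "real^'l::finite" and \<phi>s :: "real^'k::finite^'l"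
  assumes \<theta>s: "(\<pi>s, \<pi>s', \<phi>s) \<in> param_space" and inj: "inj ((*v) (transpose \<phi>s))" and "0 < \<epsilon>"
  obtains \<eta> where "0 < \<eta>" and "\<And>\<theta>. \<theta> \<in> param_space \<Longrightarrow> \<epsilon> \<le> dist \<theta> (\<pi>s, \<pi>s', \<phi>s) \<Longrightarrow>
      \<eta> < sq_hellinger (labelled_prob \<theta>) (labelled_prob (\<pi>s, \<pi>s', \<phi>s))
    \<or> \<eta> < sq_hellinger (unlabelled_prob \<theta>) (unlabelled_prob (\<pi>s, \<pi>s', \<phi>s))"
proof (rule ccontr)
  let ?\<theta>s = "(\<pi>s, \<pi>s', \<phi>s)"
  let ?H = "\<lambda>\<theta>. sq_hellinger (labelled_prob \<theta>) (labelled_prob ?\<theta>s)"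
  let ?H' = "\<lambda>\<theta>. sq_hellinger (unlabelled_prob \<theta>) (unlabelled_prob ?\<theta>s)"
  assume "\<not> thesis"
  have "\<exists>\<theta>. \<theta> \<in> param_space \<and> \<epsilon> \<le> dist \<theta> ?\<theta>s \<and> ?H \<theta> \<le> 1 / Suc n \<and> ?H' \<theta> \<le> 1 / Suc n" for n
  proof (rule ccontr)
    assume none: "\<nexists>\<theta>. \<theta> \<in> param_space \<and> \<epsilon> \<le> dist \<theta> ?\<theta>s \<and> ?H \<theta> \<le> 1 / Suc n \<and> ?H' \<theta> \<le> 1 / Suc n"
    have "1 / Suc n < ?H \<theta> \<or> 1 / Suc n < ?H' \<theta>" if "\<theta> \<in> param_space" "\<epsilon> \<le> dist \<theta> ?\<theta>s" for \<theta>
      using none that by (meson not_le)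
    then show False
      using that[of "1 / Suc n"] \<open>\<not> thesis\<close> by simp
  qed
  then obtain \<theta> where "\<forall>n. \<theta> n \<in> param_space \<and> \<epsilon> \<le> dist (\<theta> n) ?\<theta>s
      \<and> ?H (\<theta> n) \<le> 1 / Suc n \<and> ?H' (\<theta> n) \<le> 1 / Suc n"
    using choice[of "\<lambda>n \<theta>. \<theta> \<in> param_space \<and> \<epsilon> \<le> dist \<theta> ?\<theta>s \<and> ?H \<theta> \<le> 1 / Suc n \<and> ?H' \<theta> \<le> 1 / Suc n"]
    by blast
  then have \<theta>: "\<And>n. \<theta> n \<in> param_space" "\<And>n. \<epsilon> \<le> dist (\<theta> n) ?\<theta>s"
    and small: "\<And>n. ?H (\<theta> n) \<le> 1 / Suc n" "\<And>n. ?H' (\<theta> n) \<le> 1 / Suc n"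
    by auto
  have "(\<lambda>n. 1 / Suc n) \<longlonglongrightarrow> 0"
    by real_asymp
  then have "(\<lambda>n. ?H (\<theta> n)) \<longlonglongrightarrow> 0" "(\<lambda>n. ?H' (\<theta> n)) \<longlonglongrightarrow> 0"
    by (rule Lim_null_comparison[OF always_eventually[OF allI], rotated];
        use small in \<open>simp add: sq_hellinger_nonneg\<close>)+
  then have "(\<lambda>n. labelled_prob (\<theta> n)) \<longlonglongrightarrow> labelled_prob ?\<theta>s"
    and "(\<lambda>n. unlabelled_prob (\<theta> n)) \<longlonglongrightarrow> unlabelled_prob ?\<theta>s"
    using \<theta>(1) \<theta>s
    by (simp_all add: tendsto_if_sq_hellinger_tendsto_zero labelled_prob_in_open_simplex
        unlabelled_prob_in_open_simplex)
  then have "\<theta> \<longlonglongrightarrow> ?\<theta>s"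
    by (intro tendsto_param_if_probs_tendsto[OF \<theta>s inj \<theta>(1)])
  then have "\<forall>\<^sub>F n in sequentially. dist (\<theta> n) ?\<theta>s < \<epsilon>"
    using \<open>0 < \<epsilon>\<close> by (rule tendstoD)
  then show False
    using \<theta>(2) by (auto simp: not_less[symmetric])
qed

section \<open>Consistency of the MAP estimate\<close>

lemma is_MAP_imp_prior_count_likelihood_bounded:
  assumes "\<forall>\<theta>\<in>param_space. 0 < prior \<theta>" and "is_MAP prior N N' yc c' \<theta>MAP"
  shows "\<forall>\<theta>\<in>param_space. prior \<theta> * count_likelihood (\<lambda>_. max N N') (\<lambda>_. max N N') \<theta>
    \<le> prior \<theta>MAP * likelihood N N' yc c' \<theta>MAP"
proof
  fix \<theta> :: "('a, 'b) param"
  assume \<theta>: "\<theta> \<in> param_space"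
  have "count_likelihood (\<lambda>_. max N N') (\<lambda>_. max N N') \<theta> \<le> likelihood N N' yc c' \<theta>"
    unfolding likelihood_eq_count_likelihood
    by (rule count_likelihood_antimono[OF \<theta>]) (auto intro: le_trans[OF occurrences_le])
  then have "prior \<theta> * count_likelihood (\<lambda>_. max N N') (\<lambda>_. max N N') \<theta> \<le> prior \<theta> * likelihood N N' yc c' \<theta>"
    using assms(1) \<theta> by (simp add: less_imp_le)
  also have "\<dots> \<le> prior \<theta>MAP * likelihood N N' yc c' \<theta>MAP"
    using assms(2) \<theta> by (simp add: is_MAP_def)
  finally show "prior \<theta> * count_likelihood (\<lambda>_. max N N') (\<lambda>_. max N N') \<theta>
    \<le> prior \<theta>MAP * likelihood N N' yc c' \<theta>MAP" .
qed

definition hellinger_budget ::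
    "real \<Rightarrow> nat \<Rightarrow> real \<Rightarrow> (('l::finite, 'k::finite) param \<Rightarrow> real) \<Rightarrow> ('l, 'k) param \<Rightarrow> real"
  where "hellinger_budget s t B prior \<theta>s =
    4 * (s\<^sup>2 + (real t)\<^sup>2) * ((\<Sum>c\<in>UNIV. 1 / labelled_prob \<theta>s $ c) + (\<Sum>k\<in>UNIV. 1 / unlabelled_prob \<theta>s $ k))
    + ln B - ln (prior \<theta>s * count_likelihood (\<lambda>_. t) (\<lambda>_. t) \<theta>s)"

lemma sq_hellinger_le_budget_if_MAP:
  fixes \<theta>s \<theta> :: "('l::finite, 'k::finite) param"
  assumes \<theta>s: "\<theta>s \<in> param_space" and \<theta>: "\<theta> \<in> param_space" and "0 < prior \<theta>s"
    and MAP: "prior \<theta>s * count_likelihood n m \<theta>s \<le> prior \<theta> * count_likelihood n m \<theta>"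
    and bound: "prior \<theta> * count_likelihood (\<lambda>_. t) (\<lambda>_. t) \<theta> \<le> B"
    and "1 \<le> N" "1 \<le> N'"
    and "concentrated s N (labelled_prob \<theta>s) n" "concentrated s N' (unlabelled_prob \<theta>s) m"
    and "\<And>c. t \<le> n c" "\<And>k. t \<le> m k"
  shows "N / 2 * sq_hellinger (labelled_prob \<theta>) (labelled_prob \<theta>s)
      + N' / 2 * sq_hellinger (unlabelled_prob \<theta>) (unlabelled_prob \<theta>s) \<le> hellinger_budget s t B prior \<theta>s"
proof -
  define A where "A = prior \<theta>s * count_likelihood (\<lambda>_. t) (\<lambda>_. t) \<theta>s"
  let ?L = "count_likelihood (\<lambda>c. n c - t) (\<lambda>k. m k - t)"
  have split: "count_likelihood n m \<theta>' = count_likelihood (\<lambda>_. t) (\<lambda>_. t) \<theta>' * ?L \<theta>'" for \<theta>'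
  proof -
    have "(\<lambda>c. t + (n c - t)) = n" "(\<lambda>k. t + (m k - t)) = m"
      using assms(10,11) by (simp_all add: fun_eq_iff)
    then show ?thesis
      using count_likelihood_add[of "\<lambda>_. t" "\<lambda>c. n c - t" "\<lambda>_. t" "\<lambda>k. m k - t" \<theta>'] by (simp only:)
  qed
  have "A * ?L \<theta>s \<le> prior \<theta> * count_likelihood (\<lambda>_. t) (\<lambda>_. t) \<theta> * ?L \<theta>"
    using MAP by (simp add: A_def split mult.assoc)
  also have "\<dots> \<le> B * ?L \<theta>"
    using bound count_likelihood_pos[OF \<theta>] by (simp add: mult_right_mono less_imp_le)
  finally have ratio: "A * ?L \<theta>s \<le> B * ?L \<theta>" .
  have "0 < A" "0 < ?L \<theta>s" "0 < ?L \<theta>"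
    using assms(3) \<theta>s \<theta> by (simp_all add: A_def count_likelihood_pos)
  moreover from this have "0 < B"
    using ratio by (smt (verit) mult_pos_pos mult_nonpos_nonneg)
  ultimately have "ln A + ln (?L \<theta>s) \<le> ln B + ln (?L \<theta>)"
    using ratio by (simp flip: ln_mult_pos)
  then have "ln A - ln B \<le> ln (?L \<theta>) - ln (?L \<theta>s)"
    by simp
  also have "\<dots> = (ln (categorical_likelihood (labelled_prob \<theta>) (\<lambda>c. n c - t))
        - ln (categorical_likelihood (labelled_prob \<theta>s) (\<lambda>c. n c - t)))
      + (ln (categorical_likelihood (unlabelled_prob \<theta>) (\<lambda>k. m k - t))
        - ln (categorical_likelihood (unlabelled_prob \<theta>s) (\<lambda>k. m k - t)))"
    using \<theta> \<theta>s by (simp add: ln_count_likelihood)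
  also have "\<dots> \<le> (- (N / 2) * sq_hellinger (labelled_prob \<theta>) (labelled_prob \<theta>s)
        + 4 * (s\<^sup>2 + (real t)\<^sup>2) * (\<Sum>c\<in>UNIV. 1 / labelled_prob \<theta>s $ c))
      + (- (N' / 2) * sq_hellinger (unlabelled_prob \<theta>) (unlabelled_prob \<theta>s)
        + 4 * (s\<^sup>2 + (real t)\<^sup>2) * (\<Sum>k\<in>UNIV. 1 / unlabelled_prob \<theta>s $ k))"
    using assms(6-11) \<theta> \<theta>s
    by (intro add_mono ln_categorical_likelihood_ratio_le_concentrated labelled_prob_in_open_simplex
        unlabelled_prob_in_open_simplex)
  finally show ?thesis
    unfolding hellinger_budget_def A_def[symmetric] by (simp add: algebra_simps)
qed

lemma eventually_counts_exceed:
  assumes "P \<in> open_simplex"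
  shows "\<forall>\<^sub>F N in sequentially. \<forall>a. real t + s * sqrt (real N) \<le> real N * P$a"
  using open_simplexD(1)[OF assms] by (intro eventually_all_finite allI) real_asymp

lemma MAP_close_if_concentrated:
  fixes \<theta>s :: "('l::finite, 'k::finite) param"
  assumes \<theta>s: "\<theta>s \<in> param_space" and prior_pos: "\<forall>\<theta>\<in>param_space. 0 < prior \<theta>"
    and bound: "\<forall>\<theta>\<in>param_space. prior \<theta> * count_likelihood (\<lambda>_. t) (\<lambda>_. t) \<theta> \<le> B"
    and "0 < \<eta>"
    and separated: "\<And>\<theta>. \<theta> \<in> param_space \<Longrightarrow> \<epsilon> \<le> dist \<theta> \<theta>s \<Longrightarrow>
      \<eta> < sq_hellinger (labelled_prob \<theta>) (labelled_prob \<theta>s)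
    \<or> \<eta> < sq_hellinger (unlabelled_prob \<theta>) (unlabelled_prob \<theta>s)"
  obtains N0 where "\<And>N N' yc c' \<theta>. N0 \<le> N \<Longrightarrow> N0 \<le> N' \<Longrightarrow>
      concentrated s N (labelled_prob \<theta>s) (occurrences N yc) \<Longrightarrow>
      concentrated s N' (unlabelled_prob \<theta>s) (occurrences N' c') \<Longrightarrow>
      is_MAP prior N N' yc c' \<theta> \<Longrightarrow> dist \<theta> \<theta>s < \<epsilon>"
proof -
  let ?P = "labelled_prob \<theta>s" and ?Q = "unlabelled_prob \<theta>s" and ?R = "hellinger_budget s t B prior \<theta>s"
  let ?large = "\<lambda>N. (1::nat) \<le> N \<and> ?R < N * \<eta> / 2
    \<and> (\<forall>c. t + s * sqrt N \<le> N * ?P $ c) \<and> (\<forall>k. t + s * sqrt N \<le> N * ?Q $ k)"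
  have "\<forall>\<^sub>F N in sequentially. R < N * \<eta> / 2" for R
    using \<open>0 < \<eta>\<close> by real_asymp
  with eventually_ge_at_top[of 1] eventually_counts_exceed[OF labelled_prob_in_open_simplex[OF \<theta>s]]
    eventually_counts_exceed[OF unlabelled_prob_in_open_simplex[OF \<theta>s]]
  have "\<forall>\<^sub>F N in sequentially. ?large N"
    by eventually_elim blast
  then obtain N0 where N0: "\<And>N. N0 \<le> N \<Longrightarrow> ?large N"
    unfolding eventually_sequentially by blast
  show thesis
  proof (rule that)
    fix N N' yc c' \<theta>
    assume "N0 \<le> N" "N0 \<le> N'"
      and conc: "concentrated s N ?P (occurrences N yc)" and conc': "concentrated s N' ?Q (occurrences N' c')"
      and MAP: "is_MAP prior N N' yc c' \<theta>"
    have N: "?large N" and N': "?large N'"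
      using N0 \<open>N0 \<le> N\<close> \<open>N0 \<le> N'\<close> by blast+
    have \<theta>: "\<theta> \<in> param_space"
      using MAP by (simp add: is_MAP_def)
    have "N / 2 * sq_hellinger (labelled_prob \<theta>) ?P + N' / 2 * sq_hellinger (unlabelled_prob \<theta>) ?Q \<le> ?R"
    proof (rule sq_hellinger_le_budget_if_MAP[OF \<theta>s \<theta> _ _ _ _ _ conc conc'])
      show "prior \<theta>s * count_likelihood (occurrences N yc) (occurrences N' c') \<theta>s
        \<le> prior \<theta> * count_likelihood (occurrences N yc) (occurrences N' c') \<theta>"
        using MAP \<theta>s by (simp add: is_MAP_def flip: likelihood_eq_count_likelihood)
      show "t \<le> occurrences N yc c" "t \<le> occurrences N' c' k" for c k
        using N N' by (intro concentrated_imp_ge[OF conc] concentrated_imp_ge[OF conc']; blast)+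
    qed (use prior_pos bound \<theta>s \<theta> N N' in auto)
    moreover have "0 \<le> N / 2 * sq_hellinger (labelled_prob \<theta>) ?P"
      "0 \<le> N' / 2 * sq_hellinger (unlabelled_prob \<theta>) ?Q"
      by (simp_all add: sq_hellinger_nonneg)
    ultimately have "N / 2 * sq_hellinger (labelled_prob \<theta>) ?P < N / 2 * \<eta>"
      "N' / 2 * sq_hellinger (unlabelled_prob \<theta>) ?Q < N' / 2 * \<eta>"
      using N N' by linarith+
    then have "sq_hellinger (labelled_prob \<theta>) ?P < \<eta>" "sq_hellinger (unlabelled_prob \<theta>) ?Q < \<eta>"
      using N N' by simp_all
    then show "dist \<theta> \<theta>s < \<epsilon>"
      using separated[OF \<theta>] by force
  qed
qed

lemma prob_MAP_close_ge:
  fixes \<pi>s \<pi>s' :: "real^'l::finite" and \<phi>s :: "real^'k::finite^'l"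
  assumes \<theta>s: "(\<pi>s, \<pi>s', \<phi>s) \<in> param_space" and inj: "inj ((*v) (transpose \<phi>s))"
    and prior_pos: "\<forall>\<theta>\<in>param_space. 0 < prior \<theta>"
    and bound: "\<forall>\<theta>\<in>param_space. prior \<theta> * count_likelihood (\<lambda>_. t) (\<lambda>_. t) \<theta> \<le> B"
    and "0 < \<delta>" "0 < \<epsilon>"
  obtains N0 where "\<And>N N'. N0 \<le> N \<Longrightarrow> N0 \<le> N' \<Longrightarrow> 1 - \<delta> \<le> measure_pmf.prob (data_pmf N N' (\<pi>s, \<pi>s', \<phi>s))
    {(yc, c'). \<forall>\<theta>. is_MAP prior N N' yc c' \<theta> \<longrightarrow> dist \<theta> (\<pi>s, \<pi>s', \<phi>s) < \<epsilon>}"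
proof -
  let ?\<theta>s = "(\<pi>s, \<pi>s', \<phi>s)"
  let ?good = "\<lambda>s N N'. {(yc, c'). concentrated s N (labelled_prob ?\<theta>s) (occurrences N yc)
    \<and> concentrated s N' (unlabelled_prob ?\<theta>s) (occurrences N' c')}"
  obtain \<eta> where "0 < \<eta>" and separated: "\<And>\<theta>. \<theta> \<in> param_space \<Longrightarrow> \<epsilon> \<le> dist \<theta> ?\<theta>s \<Longrightarrow>
      \<eta> < sq_hellinger (labelled_prob \<theta>) (labelled_prob ?\<theta>s)
    \<or> \<eta> < sq_hellinger (unlabelled_prob \<theta>) (unlabelled_prob ?\<theta>s)"
    using far_params_hellinger_separated[OF \<theta>s inj \<open>0 < \<epsilon>\<close>] by blast
  obtain s where good: "\<And>N N'. 0 < N \<Longrightarrow> 0 < N' \<Longrightarrow>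
      1 - \<delta> \<le> measure_pmf.prob (data_pmf N N' ?\<theta>s) (?good s N N')"
    using prob_data_concentrated[OF \<theta>s \<open>0 < \<delta>\<close>] by blast
  obtain N0 where close: "\<And>N N' yc c' \<theta>. N0 \<le> N \<Longrightarrow> N0 \<le> N' \<Longrightarrow>
      concentrated s N (labelled_prob ?\<theta>s) (occurrences N yc) \<Longrightarrow>
      concentrated s N' (unlabelled_prob ?\<theta>s) (occurrences N' c') \<Longrightarrow>
      is_MAP prior N N' yc c' \<theta> \<Longrightarrow> dist \<theta> ?\<theta>s < \<epsilon>"
    using MAP_close_if_concentrated[OF \<theta>s prior_pos bound \<open>0 < \<eta>\<close> separated] by blast
  show thesis
  proof (rule that[of "Suc N0"])
    fix N N' :: nat
    assume N: "Suc N0 \<le> N" "Suc N0 \<le> N'"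
    have "?good s N N' \<subseteq> {(yc, c'). \<forall>\<theta>. is_MAP prior N N' yc c' \<theta> \<longrightarrow> dist \<theta> ?\<theta>s < \<epsilon>}"
      using close[of N N'] N by auto
    then have "measure_pmf.prob (data_pmf N N' ?\<theta>s) (?good s N N')
        \<le> measure_pmf.prob (data_pmf N N' ?\<theta>s)
             {(yc, c'). \<forall>\<theta>. is_MAP prior N N' yc c' \<theta> \<longrightarrow> dist \<theta> ?\<theta>s < \<epsilon>}"
      by (rule measure_pmf.finite_measure_mono) simp
    moreover have "1 - \<delta> \<le> measure_pmf.prob (data_pmf N N' ?\<theta>s) (?good s N N')"
      using N by (intro good) simp_all
    ultimately show "1 - \<delta> \<le> measure_pmf.prob (data_pmf N N' ?\<theta>s)
        {(yc, c'). \<forall>\<theta>. is_MAP prior N N' yc c' \<theta> \<longrightarrow> dist \<theta> ?\<theta>s < \<epsilon>}"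
      by linarith
  qed
qed

theorem mainTheorem1:
  fixes \<pi>s \<pi>s' :: "real^'l::finite" and \<phi>s :: "real^'k::finite^'l"
    and prior :: "('l, 'k) param \<Rightarrow> real"
  assumes "\<pi>s \<in> open_simplex" and "\<pi>s' \<in> open_simplex"
    and "\<forall>l. \<phi>s$l \<in> open_simplex"
    and "rank (transpose \<phi>s) = CARD('l)"
    and "continuous_on param_space prior"
    and "\<forall>\<theta>\<in>param_space. prior \<theta> > 0"
  shows "\<forall>\<delta>>0. \<forall>\<epsilon>>0. \<exists>N0 N0'. \<forall>N\<ge>N0. \<forall>N'\<ge>N0'.
           measure_pmf.prob (data_pmf N N' (\<pi>s, \<pi>s', \<phi>s))
             {(yc, c'). \<forall>\<theta>. is_MAP prior N N' yc c' \<theta> \<longrightarrow> dist \<theta> (\<pi>s, \<pi>s', \<phi>s) < \<epsilon>}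
           \<ge> 1 - \<delta>"
proof (intro allI impI)
  fix \<delta> \<epsilon> :: real
  assume "0 < \<delta>" "0 < \<epsilon>"
  have \<theta>s: "(\<pi>s, \<pi>s', \<phi>s) \<in> param_space"
    using assms(1-3) by (simp add: param_space_def)
  have inj: "inj ((*v) (transpose \<phi>s))"
    using assms(4) full_rank_injective by blast
  show "\<exists>N0 N0'. \<forall>N\<ge>N0. \<forall>N'\<ge>N0'. measure_pmf.prob (data_pmf N N' (\<pi>s, \<pi>s', \<phi>s))
      {(yc, c'). \<forall>\<theta>. is_MAP prior N N' yc c' \<theta> \<longrightarrow> dist \<theta> (\<pi>s, \<pi>s', \<phi>s) < \<epsilon>} \<ge> 1 - \<delta>"
  proof (cases "\<exists>t B. \<forall>\<theta>\<in>param_space. prior \<theta> * count_likelihood (\<lambda>_. t) (\<lambda>_. t) \<theta> \<le> B")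
    case True
    then obtain t B where "\<forall>\<theta>\<in>param_space. prior \<theta> * count_likelihood (\<lambda>_. t) (\<lambda>_. t) \<theta> \<le> B"
      by blast
    then obtain N0 where "\<And>N N'. N0 \<le> N \<Longrightarrow> N0 \<le> N' \<Longrightarrow> 1 - \<delta> \<le> measure_pmf.prob (data_pmf N N' (\<pi>s, \<pi>s', \<phi>s))
        {(yc, c'). \<forall>\<theta>. is_MAP prior N N' yc c' \<theta> \<longrightarrow> dist \<theta> (\<pi>s, \<pi>s', \<phi>s) < \<epsilon>}"
      using prob_MAP_close_ge[OF \<theta>s inj assms(6) _ \<open>0 < \<delta>\<close> \<open>0 < \<epsilon>\<close>] by blast
    then show ?thesis
      by auto
  next
    case False
    then have "\<not> is_MAP prior N N' yc c' \<theta>" for N N' yc c' \<theta>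
      using is_MAP_imp_prior_count_likelihood_bounded[OF assms(6)] by blast
    then show ?thesis
      using \<open>0 < \<delta>\<close> by simp
  qed
qed

end
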